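(* Let $p=p_1\otimes\cdots\otimes p_L\in B_{\lambda_1}\otimes\cdots\otimes B_{\lambda_L}$ be any state, and write $\rho_{k,d}=\rho_{k,d}(p)$ and $\bar\rho_{k,d}=\rho_{k,d}(T_\infty(p))$. Then for all $1\le k\le L$ and $2\le d\le n+1$, $$\bar\rho_{k,d-1}+\rho_{k-1,d}=\max\big(\bar\rho_{k,d}+\rho_{k-1,d-1},\ \bar\rho_{k-1,d-1}+\rho_{k,d}-\lambda_k\big).$$
   Context: Fix $n\ge1$. For $l\ge1$ let $B_l=\{x=(x_1,\dots,x_{n+1})\in\mathbb Z_{\ge0}^{n+1}: \sum_i x_i=l\}$ and $u_l=(l,0,\dots,0)\in B_l$. Indices of $x$ are read modulo $n+1$. For $x\in B_l,y\in B_m$ and $i\in\mathbb Z$ put $Q_i(x\otimes y)=\min_{1\le k\le n+1}\big(\sum_{j=1}^{k-1}x_{i+j}+\sum_{j=k+1}^{n+1}y_{i+j}\big)$ (so $Q_{n+1}=Q_0$) and $H(x\otimes y)=\min(l,m)-Q_0(x\otimes y)$. The combinatorial $R$ is the map $B_l\otimes B_m\to B_m\otimes B_l$, $x\otimes y\mapsto\tilde y\otimes\tilde x$, $\tilde x_i=x_i+Q_i-Q_{i-1}$, $\tilde y_i=y_i+Q_{i-1}-Q_i$ ($Q_j=Q_j(x\otimes y)$); write $x\otimes y\simeq\tilde y\otimes\tilde x$, and extend $\simeq$ to tensor products by applying $R$ to adjacent factors. Box-ball system: a state is $p=p_1\otimes\cdots\otimes p_L\in B_{\lambda_1}\otimes\cdots\otimes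 B_{\lambda_L}$ ($\lambda_j\ge1$). For $l\ge1$ let $v_0=u_l$ and recursively $v_{j-1}\otimes p_j\simeq p'_j\otimes v_j$ ($1\le j\le L$); then $T_l(p)=p'_1\otimes\cdots\otimes p'_L$. For all sufficiently large $l$, $T_l(p)$ is independent of $l$; this is $T_\infty(p)$. Writing $T_\infty^t(p)=p^t_1\otimes\cdots\otimes p^t_L$, $p^t_j=(x^t_{j,1},\dots,x^t_{j,n+1})$, define for $0\le k\le L$, $1\le d\le n+1$: $\rho_{k,d}(p)=\sum_{j=1}^k(x^0_{j,2}+\cdots+x^0_{j,d})+\sum_{t\ge1}\sum_{j=1}^k(x^t_{j,2}+\cdots+x^t_{j,n+1})$ (a finite sum), and $\rho_{k,0}(p)=\rho_{k,n+1}(p)-(\lambda_1+\cdots+\lambda_k)$. *)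

theory Defs
  imports Main
begin

(* An element x of B_l (for fixed n) is a list of n+1 naturals with sum l;
   component x_i (1-based, index read mod n+1) as an integer. *)
definition comp :: "nat \<Rightarrow> nat list \<Rightarrow> int \<Rightarrow> int" where
  "comp n x i = int (x ! nat ((i - 1) mod int (n + 1)))"

definition Qf :: "nat \<Rightarrow> int \<Rightarrow> nat list \<Rightarrow> nat list \<Rightarrow> int" where
  "Qf n i x y = Min ((\<lambda>k. (\<Sum>j = 1..k - 1. comp n x (i + int j))
                         + (\<Sum>j = k + 1..n + 1. comp n y (i + int j))) ` {1..n + 1})"

(* combinatorial R: x \<otimes> y \<mapsto> ytilde \<otimes> xtilde, returned as the pair (ytilde, xtilde) *)
definition Rmap :: "nat \<Rightarrow> nat list \<Rightarrow> nat list \<Rightarrow> nat list \<times> nat list" where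
  "Rmap n x y =
     (map (\<lambda>i. nat (comp n y (int i) + Qf n (int i - 1) x y - Qf n (int i) x y)) [1..<n + 2],
      map (\<lambda>i. nat (comp n x (int i) + Qf n (int i) x y - Qf n (int i - 1) x y)) [1..<n + 2])"

definition uvac :: "nat \<Rightarrow> nat \<Rightarrow> nat list" where
  "uvac n l = l # replicate n 0"

(* carrier passing: v_{j-1} \<otimes> p_j \<simeq> p'_j \<otimes> v_j *)
fun Tcar :: "nat \<Rightarrow> nat list \<Rightarrow> nat list list \<Rightarrow> nat list list" where
  "Tcar n v [] = []"
| "Tcar n v (p # ps) = (case Rmap n v p of (p', v') \<Rightarrow> p' # Tcar n v' ps)"

definition Tl :: "nat \<Rightarrow> nat \<Rightarrow> nat list list \<Rightarrow> nat list list" where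
  "Tl n l ps = Tcar n (uvac n l) ps"

definition Tinf :: "nat \<Rightarrow> nat list list \<Rightarrow> nat list list" where
  "Tinf n ps = (THE q. \<exists>l0. \<forall>l\<ge>l0. Tl n l ps = q)"

definition xt :: "nat \<Rightarrow> nat list list \<Rightarrow> nat \<Rightarrow> nat \<Rightarrow> nat \<Rightarrow> int" where
  "xt n ps t j i = int (((Tinf n ^^ t) ps) ! (j - 1) ! (i - 1))"

definition rho_term :: "nat \<Rightarrow> nat list list \<Rightarrow> nat \<Rightarrow> nat \<Rightarrow> int" where
  "rho_term n ps k t = (\<Sum>j = 1..k. \<Sum>i = 2..n + 1. xt n ps t j i)"

definition rho :: "nat \<Rightarrow> nat list list \<Rightarrow> nat \<Rightarrow> nat \<Rightarrow> int" where
  "rho n ps k d =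
     (if d = 0 then
        ((\<Sum>j = 1..k. \<Sum>i = 2..n + 1. xt n ps 0 j i)
          + (\<Sum>t \<in> {t. 1 \<le> t \<and> rho_term n ps k t \<noteq> 0}. rho_term n ps k t))
        - (\<Sum>j = 1..k. int (sum_list (ps ! (j - 1))))
      else
        (\<Sum>j = 1..k. \<Sum>i = 2..d. xt n ps 0 j i)
          + (\<Sum>t \<in> {t. 1 \<le> t \<and> rho_term n ps k t \<noteq> 0}. rho_term n ps k t))"

end

theory Submission
  imports Defs
begin

text \<open>
  Let \<open>v_0, v_1, \<dots>\<close> be the carriers in the computation of \<open>p' = T_\<infinity>(p)\<close>, taken with
  capacity \<open>l = \<lambda>_1 + \<dots> + \<lambda>_L\<close>, at which \<open>T_l\<close> has already stabilised. Everything rests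
  on the recursion \<open>Q_{i-1} + y_i = min(|y|, x_i + Q_i)\<close> for \<open>x \<otimes> y\<close> with \<open>|y| \<le> |x|\<close>.
  It shows that the truncations in the definition of \<open>R\<close> never act, that \<open>R\<close> conserves
  every colour, so that \<open>v_{k-1}\<close> holds the difference of the colour prefix sums of \<open>p\<close>
  and \<open>p'\<close>, and that
  \<open>min(v_{k-1,d} - p'_{k,d}, \<Sum>_{i<d} p'_{k,i} - \<Sum>_{2\<le>i\<le>d} p_{k,i}) = 0\<close>.
  As \<open>\<rho>_{k,d}(p)\<close> is its \<open>t = 0\<close> part plus \<open>\<rho>_{k,n+1}(p')\<close>, the proposition is this
  local identity rewritten in prefix sums.

  The sum over \<open>t\<close> in \<open>\<rho>\<close> is finite because under \<open>T_\<infinity>\<close> the balls (colours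
  \<open>2, \<dots>, n+1\<close>) leave through the right end: weighting each ball by its distance to that
  end gives a potential that strictly decreases until no ball is left.
\<close>

section \<open>The function \<open>Q\<close>\<close>

definition Qterm :: "nat \<Rightarrow> int \<Rightarrow> nat list \<Rightarrow> nat list \<Rightarrow> nat \<Rightarrow> int" where
  "Qterm n i x y k =
     (\<Sum>j = 1..k - 1. comp n x (i + int j)) + (\<Sum>j = k + 1..n + 1. comp n y (i + int j))"

lemma Qf_eq_Min: "Qf n i x y = Min (Qterm n i x y ` {1..n + 1})"
  by (simp add: Qf_def Qterm_def)

lemma Qf_le_Qterm: "k \<in> {1..n + 1} \<Longrightarrow> Qf n i x y \<le> Qterm n i x y k"
  unfolding Qf_eq_Min by (rule Min_le) auto

lemma Qf_attained: obtains k where "k \<in> {1..n + 1}" "Qf n i x y = Qterm n i x y k"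
proof -
  have "Min (Qterm n i x y ` {1..n + 1}) \<in> Qterm n i x y ` {1..n + 1}"
    by (rule Min_in) auto
  then show ?thesis using that unfolding Qf_eq_Min by blast
qed

lemma comp_nonneg: "0 \<le> comp n x i"
  by (simp add: comp_def)

lemma comp_add_period: "comp n x (i + int (n + 1)) = comp n x i"
proof -
  have "(i + int (n + 1) - 1) mod int (n + 1) = (i - 1) mod int (n + 1)"
    by (metis add_diff_eq mod_add_self2 diff_add_eq)
  then show ?thesis by (simp add: comp_def)
qed

lemma comp_Suc: "i < n + 1 \<Longrightarrow> comp n x (int (Suc i)) = int (x ! i)"
  by (simp add: comp_def)

lemma Qterm_nonneg: "0 \<le> Qterm n i x y k"
  unfolding Qterm_def by (intro add_nonneg_nonneg sum_nonneg) (auto simp: comp_nonneg)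

lemma Qf_nonneg: "0 \<le> Qf n i x y"
  by (metis Qf_attained Qterm_nonneg)

lemma sum_int_index_shift:
  "(\<Sum>j = Suc a..Suc b. f (i - 1 + int j)) = (\<Sum>j = a..b. f (i + int j))"
  by (subst sum.shift_bounds_cl_Suc_ivl) simp

lemma sum_comp_period_split:
  "(\<Sum>j = 1..n + 1. comp n x (i + int j)) = (\<Sum>j = 1..n. comp n x (i + int j)) + comp n x i"
  using comp_add_period[of n x i] by (simp add: add.commute)

lemma sum_comp_period_shift:
  "(\<Sum>j = 1..n + 1. comp n x (i + 1 + int j)) = (\<Sum>j = 1..n + 1. comp n x (i + int j))"
proof -
  have "(\<Sum>j = 1..n + 1. comp n x (i + int j))
      = comp n x (i + 1) + (\<Sum>j = Suc 1..Suc n. comp n x (i + 1 - 1 + int j))"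
    by (simp add: sum.atLeast_Suc_atMost)
  also have "\<dots> = comp n x (i + 1) + (\<Sum>j = 1..n. comp n x (i + 1 + int j))"
    by (simp only: sum_int_index_shift)
  finally show ?thesis using sum_comp_period_split[of n x "i + 1"] by simp
qed

lemma sum_comp_period:
  assumes "length x = n + 1"
  shows "(\<Sum>j = 1..n + 1. comp n x (i + int j)) = int (sum_list x)"
proof -
  have "(\<Sum>j = 1..n + 1. comp n x (i + int j)) = (\<Sum>j = 1..n + 1. comp n x (int j))"
  proof (induction i rule: int_induct[where k = 0])
    case (step1 i) then show ?case by (metis sum_comp_period_shift)
  next
    case (step2 i) then show ?case using sum_comp_period_shift[of n x "i - 1"] by simp
  qed simp
  also have "\<dots> = (\<Sum>j < n + 1. int (x ! j))"
    by (simp add: sum.atLeast1_atMost_eq comp_Suc del: of_nat_Suc)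
  also have "\<dots> = int (sum_list x)"
    using assms by (simp add: sum_list_sum_nth atLeast0LessThan)
  finally show ?thesis .
qed

lemma Qterm_first:
  assumes "length y = n + 1"
  shows "Qterm n (i - 1) x y 1 + comp n y i = int (sum_list y)"
proof -
  have "Qterm n (i - 1) x y 1 = (\<Sum>j = Suc 1..Suc n. comp n y (i - 1 + int j))"
    by (simp add: Qterm_def)
  then show ?thesis
    using sum_comp_period[OF assms, of i] sum_comp_period_split[of n y i]
    by (simp only: sum_int_index_shift)
qed

lemma Qterm_last:
  assumes "length x = n + 1"
  shows "Qterm n i x y (n + 1) + comp n x i = int (sum_list x)"
  using sum_comp_period[OF assms, of i] sum_comp_period_split[of n x i]
  by (simp add: Qterm_def)

lemma Qterm_shift:
  assumes "1 \<le> k" "k \<le> n"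
  shows "Qterm n (i - 1) x y (k + 1) + comp n y i = comp n x i + Qterm n i x y k"
proof -
  have "(\<Sum>j = Suc 0..Suc (k - 1). comp n x (i - 1 + int j))
      = comp n x i + (\<Sum>j = 1..k - 1. comp n x (i + int j))"
    by (simp only: sum_int_index_shift) (simp add: sum.atLeast_Suc_atMost)
  moreover have "(\<Sum>j = Suc (Suc k)..Suc n. comp n y (i - 1 + int j)) + comp n y i
      = (\<Sum>j = Suc k..Suc n. comp n y (i + int j))"
    using assms comp_add_period[of n y i] by (simp only: sum_int_index_shift) (simp add: add.commute)
  ultimately show ?thesis
    using assms by (simp add: Qterm_def)
qed

lemma Qf_le_sum_list:
  assumes "length y = n + 1"
  shows "Qf n i x y \<le> int (sum_list y)"
  using Qf_le_Qterm[of 1 n i x y] Qterm_first[OF assms, of "i + 1" x] comp_nonneg[of n y "i + 1"]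
  by simp

lemma Qf_recurrence:
  assumes lx: "length x = n + 1" and ly: "length y = n + 1" and xy: "sum_list y \<le> sum_list x"
  shows "Qf n (i - 1) x y + comp n y i = min (int (sum_list y)) (comp n x i + Qf n i x y)"
proof (rule antisym)
  have le_sum: "Qf n (i - 1) x y + comp n y i \<le> int (sum_list y)"
    using Qf_le_Qterm[of 1 n "i - 1" x y] Qterm_first[OF ly, of i x] by simp
  obtain k where k: "k \<in> {1..n + 1}" "Qf n i x y = Qterm n i x y k"
    by (rule Qf_attained)
  have "Qf n (i - 1) x y + comp n y i \<le> comp n x i + Qf n i x y"
  proof (cases "k \<le> n")
    case True
    then have "Qf n (i - 1) x y \<le> Qterm n (i - 1) x y (k + 1)"
      using k by (intro Qf_le_Qterm) auto
    then show ?thesis using Qterm_shift[of k n i x y] k True by simp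
  next
    case False
    then have "k = n + 1" using k by simp
    then show ?thesis using k Qterm_last[OF lx, of i y] le_sum xy by simp
  qed
  with le_sum show "Qf n (i - 1) x y + comp n y i \<le> min (int (sum_list y)) (comp n x i + Qf n i x y)"
    by simp
next
  obtain k where k: "k \<in> {1..n + 1}" "Qf n (i - 1) x y = Qterm n (i - 1) x y k"
    by (rule Qf_attained)
  show "min (int (sum_list y)) (comp n x i + Qf n i x y) \<le> Qf n (i - 1) x y + comp n y i"
  proof (cases "k = 1")
    case True
    then show ?thesis using k Qterm_first[OF ly, of i x] by simp
  next
    case False
    then obtain m where m: "k = m + 1" "1 \<le> m" "m \<le> n"
      using k by (cases k) auto
    then have "Qf n i x y \<le> Qterm n i x y m"
      by (intro Qf_le_Qterm) auto
    moreover have "Qterm n (i - 1) x y k + comp n y i = comp n x i + Qterm n i x y m"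
      using m Qterm_shift[of m n i x y] by simp
    ultimately show ?thesis using k by simp
  qed
qed

lemma Qf_add_period: "Qf n (i + int (n + 1)) x y = Qf n i x y"
proof -
  have "comp n z (i + int (n + 1) + int j) = comp n z (i + int j)" for z j
    using comp_add_period[of n z "i + int j"] by (simp add: ac_simps)
  then have "Qterm n (i + int (n + 1)) x y = Qterm n i x y"
    by (simp add: Qterm_def fun_eq_iff)
  then show ?thesis by (simp add: Qf_eq_Min)
qed

section \<open>The combinatorial \<open>R\<close>\<close>

text \<open>
  Entry \<open>0\<close> of a list is colour \<open>1\<close>, the empty boxes: the carrier \<open>v\<close> has room for
  all of \<open>p\<close>.
\<close>

definition admissible :: "nat \<Rightarrow> nat list \<Rightarrow> nat list \<Rightarrow> bool" where
  "admissible n v p \<longleftrightarrow> length v = n + 1 \<and> length p = n + 1 \<and> sum_list p \<le> v ! 0"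

lemma admissible_Qf_recurrence:
  assumes "admissible n v p"
  shows "Qf n (i - 1) v p + comp n p i = min (int (sum_list p)) (comp n v i + Qf n i v p)"
  using assms elem_le_sum_list[of 0 v] by (intro Qf_recurrence) (auto simp: admissible_def)

lemma length_Rmap: "length (fst (Rmap n v p)) = n + 1" "length (snd (Rmap n v p)) = n + 1"
  by (simp_all add: Rmap_def)

lemma Rmap_fst_nth:
  assumes "admissible n v p" and "i < n + 1"
  shows "int (fst (Rmap n v p) ! i) = int (p ! i) + Qf n (int i) v p - Qf n (int (Suc i)) v p"
  using admissible_Qf_recurrence[OF assms(1), of "int (Suc i)"] assms comp_Suc[OF assms(2)]
    Qf_le_sum_list[of p n "int (Suc i)" v] comp_nonneg[of n v "int (Suc i)"]
  by (simp add: Rmap_def admissible_def del: upt_Suc)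

lemma Rmap_snd_nth:
  assumes "admissible n v p" and "i < n + 1"
  shows "int (snd (Rmap n v p) ! i) = int (v ! i) + Qf n (int (Suc i)) v p - Qf n (int i) v p"
  using admissible_Qf_recurrence[OF assms(1), of "int (Suc i)"] assms comp_Suc[OF assms(2)]
    comp_nonneg[of n p "int (Suc i)"]
  by (simp add: Rmap_def del: upt_Suc)

lemma Rmap_conserves:
  assumes "admissible n v p" and "i < n + 1"
  shows "fst (Rmap n v p) ! i + snd (Rmap n v p) ! i = p ! i + v ! i"
  using Rmap_fst_nth[OF assms] Rmap_snd_nth[OF assms] by simp

lemma Qf_zero:
  assumes "admissible n v p"
  shows "Qf n 0 v p = int (sum_list p) - int (p ! 0)"
  using admissible_Qf_recurrence[OF assms, of 1] Qf_nonneg[of n 1 v p] assms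
  by (simp add: comp_def admissible_def)

lemma sum_list_eq_sum_nth:
  assumes "length x = n + 1"
  shows "int (sum_list x) = (\<Sum>i = 1..n + 1. int (x ! (i - 1)))"
  using assms by (simp add: sum_list_sum_nth atLeast0LessThan sum.atLeast1_atMost_eq)

lemma Rmap_fst_prefix_sum:
  assumes "admissible n v p" and "e \<le> n + 1"
  shows "(\<Sum>i = 1..e. int (fst (Rmap n v p) ! (i - 1)))
         = (\<Sum>i = 1..e. int (p ! (i - 1))) + Qf n 0 v p - Qf n (int e) v p"
  using assms(2)
proof (induction e)
  case (Suc e)
  then show ?case using Rmap_fst_nth[OF assms(1), of e] by simp
qed simp

lemma sum_list_Rmap_fst:
  assumes "admissible n v p"
  shows "sum_list (fst (Rmap n v p)) = sum_list p"
proof -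
  have "int (sum_list (fst (Rmap n v p))) = (\<Sum>i = 1..n + 1. int (fst (Rmap n v p) ! (i - 1)))"
    by (rule sum_list_eq_sum_nth) (simp add: length_Rmap)
  also have "\<dots> = (\<Sum>i = 1..n + 1. int (p ! (i - 1)))"
    using Rmap_fst_prefix_sum[OF assms, of "n + 1"] Qf_add_period[of n 0 v p]
    by (simp del: sum.cl_ivl_Suc)
  also have "\<dots> = int (sum_list p)"
    using assms by (simp add: admissible_def sum_list_eq_sum_nth)
  finally show ?thesis by simp
qed

lemma Rmap_local_identity:
  assumes adm: "admissible n v p" and e: "e < n + 1"
  defines "q \<equiv> fst (Rmap n v p)"
  shows "min (int (v ! e) - int (q ! e))
             ((\<Sum>i = 1..e. int (q ! (i - 1))) - (\<Sum>i = 2..Suc e. int (p ! (i - 1)))) = 0"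
proof -
  let ?Q = "\<lambda>i. Qf n i v p"
  have rec: "?Q (int e) + int (p ! e) = min (int (sum_list p)) (int (v ! e) + ?Q (int (Suc e)))"
    using admissible_Qf_recurrence[OF adm, of "int (Suc e)"] comp_Suc[OF e] by simp
  have "(\<Sum>i = 1..Suc e. int (p ! (i - 1))) = (\<Sum>i = 1..e. int (p ! (i - 1))) + int (p ! e)"
    by simp
  moreover have "(\<Sum>i = 1..Suc e. int (p ! (i - 1))) = int (p ! 0) + (\<Sum>i = 2..Suc e. int (p ! (i - 1)))"
    by (simp add: sum.atLeast_Suc_atMost numeral_2_eq_2)
  \<comment> \<open>The two arguments of the \<open>min\<close> are those in \<open>rec\<close>, both shifted by \<open>- Q_e - p_e\<close>.\<close>
  ultimately show ?thesis
    using rec Rmap_fst_prefix_sum[OF adm, of e] Rmap_fst_nth[OF adm e] Qf_zero[OF adm] e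
    unfolding q_def min_def by (auto split: if_splits)
qed

lemma Rmap_snd_hd_ge:
  assumes "admissible n v p"
  shows "v ! 0 \<le> snd (Rmap n v p) ! 0 + sum_list p"
  using Rmap_snd_nth[OF assms, of 0] Qf_nonneg[of n 1 v p] Qf_le_sum_list[of p n 0 v] assms
  by (simp add: admissible_def)

lemma Rmap_snd_nth_vacant:
  assumes "admissible n v p" and "i < n + 1" and "v ! i = 0"
  shows "snd (Rmap n v p) ! i = p ! i"
  using admissible_Qf_recurrence[OF assms(1), of "int (Suc i)"] Rmap_snd_nth[OF assms(1,2)]
    comp_Suc[OF assms(2)] Qf_le_sum_list[of p n "int (Suc i)" v] assms
  by (simp add: admissible_def)

lemma Qf_indep_vacancies:
  assumes adm: "admissible n v p" "admissible n w p" and eq: "\<forall>i\<in>{1..n}. v ! i = w ! i"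
    and i: "0 \<le> i" "i \<le> int (n + 1)"
  shows "Qf n i v p = Qf n i w p"
proof -
  \<comment> \<open>\<open>Q_0 = |p| - p_1\<close> does not involve \<open>v\<close>; the recursion then descends through
    \<open>v_{n+1}, \<dots>, v_2\<close>.\<close>
  have neg: "Qf n (- int j) v p = Qf n (- int j) w p" if "j \<le> n" for j
    using that
  proof (induction j)
    case 0
    then show ?case using Qf_zero[OF adm(1)] Qf_zero[OF adm(2)] by simp
  next
    case (Suc j)
    have "(- int j - 1) mod int (n + 1) = (- int j - 1 + int (n + 1)) mod int (n + 1)"
      by (rule mod_add_self2[symmetric])
    also have "\<dots> = int (n - j)"
      using Suc.prems by simp
    finally have "nat ((- int j - 1) mod int (n + 1)) = n - j"
      by (simp only: nat_int)
    then have "comp n v (- int j) = comp n w (- int j)"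
      using eq Suc.prems unfolding comp_def by simp
    then have "Qf n (- int j - 1) v p = Qf n (- int j - 1) w p"
      using admissible_Qf_recurrence[OF adm(1), of "- int j"]
        admissible_Qf_recurrence[OF adm(2), of "- int j"] Suc
      by simp
    moreover have "- int (Suc j) = - int j - 1"
      by simp
    ultimately show ?case
      by (simp only:)
  qed
  show ?thesis
  proof (cases "i = 0")
    case False
    define j where "j = nat (int (n + 1) - i)"
    have j: "j \<le> n" "i = - int j + int (n + 1)"
      using i False by (auto simp: j_def)
    then show ?thesis
      using Qf_add_period[of n "- int j" v p] Qf_add_period[of n "- int j" w p] neg[OF j(1)]
      by (simp only:)
  qed (use neg[of 0] in simp)
qed

lemma Rmap_indep_vacancies:
  assumes adm: "admissible n v p" "admissible n w p" and eq: "\<forall>i\<in>{1..n}. v ! i = w ! i"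
  shows "fst (Rmap n v p) = fst (Rmap n w p)"
    and "\<forall>i\<in>{1..n}. snd (Rmap n v p) ! i = snd (Rmap n w p) ! i"
proof -
  have Q: "Qf n (int i) v p = Qf n (int i) w p" if "i \<le> n + 1" for i
    using Qf_indep_vacancies[OF adm eq] that by simp
  show "fst (Rmap n v p) = fst (Rmap n w p)"
  proof (rule nth_equalityI)
    fix i assume "i < length (fst (Rmap n v p))"
    then have "i < n + 1" by (simp add: length_Rmap)
    then show "fst (Rmap n v p) ! i = fst (Rmap n w p) ! i"
      using Rmap_fst_nth[OF adm(1)] Rmap_fst_nth[OF adm(2)] Q[of i] Q[of "Suc i"]
      by (metis Suc_leI less_imp_le_nat of_nat_eq_iff)
  qed (simp add: length_Rmap)
  show "\<forall>i\<in>{1..n}. snd (Rmap n v p) ! i = snd (Rmap n w p) ! i"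
    using Rmap_snd_nth[OF adm(1)] Rmap_snd_nth[OF adm(2)] Q eq
    by (metis Suc_leI atLeastAtMost_iff le_SucI le_imp_less_Suc Suc_eq_plus1 of_nat_eq_iff)
qed

section \<open>The carriers of \<open>T\<^sub>\<infinity>\<close>\<close>

fun carriers :: "nat \<Rightarrow> nat list \<Rightarrow> nat list list \<Rightarrow> nat list list" where
  "carriers n v [] = [v]"
| "carriers n v (p # ps) = v # carriers n (snd (Rmap n v p)) ps"

lemma Tcar_Cons: "Tcar n v (p # ps) = fst (Rmap n v p) # Tcar n (snd (Rmap n v p)) ps"
  by (simp add: split_beta)

declare Tcar.simps(2)[simp del]

lemma length_Tcar: "length (Tcar n v ps) = length ps"
  by (induction ps arbitrary: v) (auto simp: Tcar_Cons)

lemma carriers_nth_0: "carriers n v ps ! 0 = v"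
  by (cases ps) auto

lemma carriers_nth_Suc:
  "j < length ps \<Longrightarrow> carriers n v ps ! Suc j = snd (Rmap n (carriers n v ps ! j) (ps ! j))"
  by (induction ps arbitrary: v j) (auto simp: carriers_nth_0 nth_Cons split: nat.split)

lemma Tcar_nth: "j < length ps \<Longrightarrow> Tcar n v ps ! j = fst (Rmap n (carriers n v ps ! j) (ps ! j))"
  by (induction ps arbitrary: v j) (auto simp: Tcar_Cons carriers_nth_0 nth_Cons split: nat.split)

definition wf_state :: "nat \<Rightarrow> nat list list \<Rightarrow> bool" where
  "wf_state n ps \<longleftrightarrow> (\<forall>p \<in> set ps. length p = n + 1)"

definition total_size :: "nat list list \<Rightarrow> nat" where
  "total_size ps = sum_list (map sum_list ps)"

lemma total_size_drop:
  "j < length ps \<Longrightarrow> total_size (drop j ps) = sum_list (ps ! j) + total_size (drop (Suc j) ps)"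
  by (simp add: total_size_def Cons_nth_drop_Suc[symmetric])

lemma length_uvac: "length (uvac n l) = n + 1"
  by (simp add: uvac_def)

lemma uvac_nth_0: "uvac n l ! 0 = l"
  by (simp add: uvac_def)

lemma uvac_nth_vacant: "i \<in> {1..n} \<Longrightarrow> uvac n l ! i = 0"
  by (cases i) (auto simp: uvac_def)

lemma Tcar_indep_vacancies:
  assumes "wf_state n ps" "length v = n + 1" "length w = n + 1" "\<forall>i\<in>{1..n}. v ! i = w ! i"
    "total_size ps \<le> v ! 0" "total_size ps \<le> w ! 0"
  shows "Tcar n v ps = Tcar n w ps"
  using assms
proof (induction ps arbitrary: v w)
  case (Cons p ps)
  have adm: "admissible n v p" "admissible n w p"
    using Cons.prems by (auto simp: admissible_def wf_state_def total_size_def)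
  have "Tcar n (snd (Rmap n v p)) ps = Tcar n (snd (Rmap n w p)) ps"
    using Cons.prems Rmap_snd_hd_ge[OF adm(1)] Rmap_snd_hd_ge[OF adm(2)]
      Rmap_indep_vacancies(2)[OF adm Cons.prems(4)]
    by (intro Cons.IH) (auto simp: wf_state_def total_size_def length_Rmap)
  then show ?case
    by (simp add: Tcar_Cons Rmap_indep_vacancies(1)[OF adm Cons.prems(4)])
qed simp

lemma Tinf_eq_Tl_total_size:
  assumes "wf_state n ps"
  shows "Tinf n ps = Tl n (total_size ps) ps"
proof -
  have stable: "Tl n l ps = Tl n (total_size ps) ps" if "total_size ps \<le> l" for l
    unfolding Tl_def using assms that
    by (intro Tcar_indep_vacancies) (auto simp: length_uvac uvac_nth_0 uvac_nth_vacant)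
  show ?thesis unfolding Tinf_def
  proof (rule the_equality)
    fix q assume "\<exists>l0. \<forall>l\<ge>l0. Tl n l ps = q"
    then obtain l0 where "\<forall>l\<ge>l0. Tl n l ps = q" by blast
    then show "q = Tl n (total_size ps) ps"
      using stable[of "max l0 (total_size ps)"] by simp
  qed (use stable in blast)
qed

text \<open>The paper's \<open>v_j\<close>, entering \<open>ps ! j = p_{j+1}\<close>.\<close>

definition carrier :: "nat \<Rightarrow> nat list list \<Rightarrow> nat \<Rightarrow> nat list" where
  "carrier n ps j = carriers n (uvac n (total_size ps)) ps ! j"

lemma carrier_0: "carrier n ps 0 = uvac n (total_size ps)"
  by (simp add: carrier_def carriers_nth_0)

lemma carrier_Suc: "j < length ps \<Longrightarrow> carrier n ps (Suc j) = snd (Rmap n (carrier n ps j) (ps ! j))"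
  by (simp add: carrier_def carriers_nth_Suc)

context
  fixes n :: nat and ps :: "nat list list"
  assumes wf: "wf_state n ps"
begin

lemma Tinf_nth: "j < length ps \<Longrightarrow> Tinf n ps ! j = fst (Rmap n (carrier n ps j) (ps ! j))"
  by (simp add: Tinf_eq_Tl_total_size[OF wf] Tl_def Tcar_nth carrier_def)

lemma length_Tinf: "length (Tinf n ps) = length ps"
  by (simp add: Tinf_eq_Tl_total_size[OF wf] Tl_def length_Tcar)

lemma carrier_invariant:
  "j \<le> length ps \<Longrightarrow> length (carrier n ps j) = n + 1 \<and> total_size (drop j ps) \<le> carrier n ps j ! 0"
proof (induction j)
  case 0
  then show ?case by (simp add: carrier_0 length_uvac uvac_nth_0)
next
  case (Suc j)
  then have j: "j < length ps" by simp
  then have "admissible n (carrier n ps j) (ps ! j)"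
    using Suc wf total_size_drop[OF j] by (simp add: admissible_def wf_state_def)
  then show ?case
    using Rmap_snd_hd_ge total_size_drop[OF j] Suc j by (fastforce simp: carrier_Suc length_Rmap)
qed

lemma admissible_carrier: "j < length ps \<Longrightarrow> admissible n (carrier n ps j) (ps ! j)"
  using carrier_invariant[of j] total_size_drop[of j ps] wf by (simp add: admissible_def wf_state_def)

lemma wf_state_Tinf: "wf_state n (Tinf n ps)"
  by (auto simp: wf_state_def in_set_conv_nth length_Tinf Tinf_nth length_Rmap)

lemma sum_list_Tinf_nth: "j < length ps \<Longrightarrow> sum_list (Tinf n ps ! j) = sum_list (ps ! j)"
  by (simp add: Tinf_nth sum_list_Rmap_fst admissible_carrier)

lemma column_conservation:
  assumes "i \<in> {1..n}" and "j \<le> length ps"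
  shows "(\<Sum>j' < j. Tinf n ps ! j' ! i) + carrier n ps j ! i = (\<Sum>j' < j. ps ! j' ! i)"
  using assms(2)
proof (induction j)
  case 0
  then show ?case using assms(1) by (simp add: carrier_0 uvac_nth_vacant)
next
  case (Suc j)
  then have "j < length ps" by simp
  then have "Tinf n ps ! j ! i + carrier n ps (Suc j) ! i = ps ! j ! i + carrier n ps j ! i"
    using Rmap_conserves[OF admissible_carrier] assms(1) by (simp add: Tinf_nth carrier_Suc)
  then show ?case using Suc by simp
qed

lemma Tinf_local_identity:
  assumes K: "K < length ps" and e: "e \<in> {1..n}"
  defines "qs \<equiv> Tinf n ps"
  shows "min ((\<Sum>j < K. int (ps ! j ! e)) - (\<Sum>j < Suc K. int (qs ! j ! e)))
             ((\<Sum>i = 1..e. int (qs ! K ! (i - 1))) - (\<Sum>i = 2..Suc e. int (ps ! K ! (i - 1)))) = 0"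
proof -
  have q: "qs ! K = fst (Rmap n (carrier n ps K) (ps ! K))"
    unfolding qs_def by (rule Tinf_nth[OF K])
  have "(\<Sum>j < K. int (qs ! j ! e)) + int (carrier n ps K ! e) = (\<Sum>j < K. int (ps ! j ! e))"
    using column_conservation[OF e, of K] K unfolding qs_def by (simp flip: of_nat_sum)
  then have "(\<Sum>j < K. int (ps ! j ! e)) - (\<Sum>j < Suc K. int (qs ! j ! e))
      = int (carrier n ps K ! e) - int (qs ! K ! e)"
    by simp
  moreover have "e < n + 1"
    using e by simp
  ultimately show ?thesis
    unfolding q using Rmap_local_identity[OF admissible_carrier[OF K]] by simp
qed

end

section \<open>Finiteness of the sum over \<open>t\<close>\<close>

definition balls :: "nat \<Rightarrow> nat list \<Rightarrow> nat" where
  "balls n p = (\<Sum>i \<in> {1..n}. p ! i)"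

definition ball_potential :: "nat \<Rightarrow> nat list list \<Rightarrow> nat" where
  "ball_potential n ps = (\<Sum>k \<in> {1..length ps}. \<Sum>j < k. balls n (ps ! j))"

lemma balls_eq_0_iff: "balls n p = 0 \<longleftrightarrow> (\<forall>i \<in> {1..n}. p ! i = 0)"
  by (simp add: balls_def)

lemma ball_potential_eq_0_iff:
  "ball_potential n ps = 0 \<longleftrightarrow> (\<forall>j < length ps. balls n (ps ! j) = 0)"
  by (auto simp: ball_potential_def)

context
  fixes n :: nat and ps :: "nat list list"
  assumes wf: "wf_state n ps"
begin

lemma ball_potential_Tinf:
  "ball_potential n (Tinf n ps) + (\<Sum>k \<in> {1..length ps}. balls n (carrier n ps k))
   = ball_potential n ps"
proof -
  have "(\<Sum>j < k. balls n (Tinf n ps ! j)) + balls n (carrier n ps k) = (\<Sum>j < k. balls n (ps ! j))"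
    if "k \<le> length ps" for k
  proof -
    have "(\<Sum>j < k. balls n (Tinf n ps ! j)) + balls n (carrier n ps k)
        = (\<Sum>i \<in> {1..n}. (\<Sum>j < k. Tinf n ps ! j ! i) + carrier n ps k ! i)"
      unfolding balls_def sum.distrib by (simp add: sum.swap[of _ "{..<k}"])
    also have "\<dots> = (\<Sum>i \<in> {1..n}. \<Sum>j < k. ps ! j ! i)"
      using column_conservation[OF wf _ that] by simp
    also have "\<dots> = (\<Sum>j < k. balls n (ps ! j))"
      unfolding balls_def by (rule sum.swap)
    finally show ?thesis .
  qed
  then show ?thesis
    by (simp add: ball_potential_def length_Tinf[OF wf] flip: sum.distrib)
qed

lemma ball_potential_eq_0_if_carriers_vacant:
  assumes "\<forall>k \<in> {1..length ps}. balls n (carrier n ps k) = 0"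
  shows "ball_potential n ps = 0"
  unfolding ball_potential_eq_0_iff
proof (intro allI impI)
  fix j assume j: "j < length ps"
  have "balls n (carrier n ps j) = 0"
    using assms j by (cases j) (auto simp: carrier_0 balls_eq_0_iff uvac_nth_vacant)
  then have "carrier n ps (Suc j) ! i = ps ! j ! i" if "i \<in> {1..n}" for i
    using Rmap_snd_nth_vacant[OF admissible_carrier[OF wf j]] that j
    by (simp add: carrier_Suc balls_eq_0_iff)
  then show "balls n (ps ! j) = 0"
    using assms j by (simp add: balls_eq_0_iff)
qed

lemma ball_potential_Tinf_le: "ball_potential n (Tinf n ps) \<le> ball_potential n ps"
  using ball_potential_Tinf le_add1 by metis

lemma ball_potential_Tinf_less:
  assumes "ball_potential n ps \<noteq> 0"
  shows "ball_potential n (Tinf n ps) < ball_potential n ps"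
proof -
  have "(\<Sum>k \<in> {1..length ps}. balls n (carrier n ps k)) \<noteq> 0"
    using ball_potential_eq_0_if_carriers_vacant assms
    by (simp only: sum_eq_0_iff[OF finite_atLeastAtMost]) blast
  then show ?thesis
    using ball_potential_Tinf by linarith
qed

end

lemma wf_state_funpow_Tinf:
  "wf_state n ps \<Longrightarrow> wf_state n ((Tinf n ^^ t) ps) \<and> length ((Tinf n ^^ t) ps) = length ps"
  by (induction t) (auto simp: wf_state_Tinf length_Tinf)

lemma ball_potential_funpow_Tinf:
  "wf_state n ps \<Longrightarrow> ball_potential n ps \<le> t \<Longrightarrow> ball_potential n ((Tinf n ^^ t) ps) = 0"
proof (induction t arbitrary: ps)
  case (Suc t)
  have "ball_potential n (Tinf n ps) \<le> t"
    using ball_potential_Tinf_le[OF Suc.prems(1)] ball_potential_Tinf_less[OF Suc.prems(1)] Suc.prems(2)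
    by (cases "ball_potential n ps = 0") auto
  then show ?case
    using Suc.IH[of "Tinf n ps"] wf_state_Tinf[OF Suc.prems(1)] by (simp add: funpow_swap1)
qed simp

lemma rho_term_eq_0:
  assumes "wf_state n ps" and "k \<le> length ps" and "ball_potential n ps \<le> t"
  shows "rho_term n ps k t = 0"
proof -
  let ?P = "(Tinf n ^^ t) ps"
  have "\<forall>j < length ?P. balls n (?P ! j) = 0"
    using ball_potential_funpow_Tinf[OF assms(1,3)] ball_potential_eq_0_iff by blast
  then have "xt n ps t j i = 0" if "j \<in> {1..k}" "i \<in> {2..n + 1}" for j i
    using that assms(2) wf_state_funpow_Tinf[OF assms(1), of t]
    by (auto simp: xt_def balls_eq_0_iff dest!: spec[of _ "j - 1"] bspec[of _ _ "i - 1"])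
  then show ?thesis by (simp add: rho_term_def)
qed

section \<open>The quantities \<open>\<rho>\<close>\<close>

definition partial_mass :: "nat list list \<Rightarrow> nat \<Rightarrow> nat \<Rightarrow> int" where
  "partial_mass xs k d = (\<Sum>j = 1..k. \<Sum>i = 2..d. int (xs ! (j - 1) ! (i - 1)))"

definition rho_tail :: "nat \<Rightarrow> nat list list \<Rightarrow> nat \<Rightarrow> int" where
  "rho_tail n xs k = (\<Sum>t \<in> {t. 1 \<le> t \<and> rho_term n xs k t \<noteq> 0}. rho_term n xs k t)"

lemma rho_eq_partial_mass_add_tail:
  "d \<noteq> 0 \<Longrightarrow> rho n xs k d = partial_mass xs k d + rho_tail n xs k"
  by (simp add: rho_def partial_mass_def rho_tail_def xt_def)

lemma rho_term_Suc: "rho_term n xs k (Suc t) = rho_term n (Tinf n xs) k t"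
  by (simp add: rho_term_def xt_def funpow_swap1)

lemma rho_term_1: "rho_term n xs k 1 = partial_mass (Tinf n xs) k (n + 1)"
  by (simp add: rho_term_def xt_def partial_mass_def)

lemma sum_nonzero_eq_sum_upto:
  fixes g :: "nat \<Rightarrow> 'a::comm_monoid_add"
  assumes "\<And>t. B < t \<Longrightarrow> g t = 0"
  shows "(\<Sum>t \<in> {t. 1 \<le> t \<and> g t \<noteq> 0}. g t) = (\<Sum>t = 1..B. g t)"
  by (rule sum.mono_neutral_left) (use assms in \<open>auto simp: not_less[symmetric]\<close>)

lemma rho_tail_Tinf:
  assumes "wf_state n ps" and "k \<le> length ps"
  shows "rho_tail n ps k = partial_mass (Tinf n ps) k (n + 1) + rho_tail n (Tinf n ps) k"
proof -
  define B where "B = ball_potential n ps"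
  have vanish: "rho_term n ps k t = 0" if "B \<le> t" for t
    using rho_term_eq_0[OF assms] that by (simp add: B_def)
  have "rho_tail n ps k = (\<Sum>t = 1..Suc B. rho_term n ps k t)"
    unfolding rho_tail_def using vanish by (intro sum_nonzero_eq_sum_upto) auto
  also have "\<dots> = rho_term n ps k 1 + (\<Sum>t = 1..B. rho_term n ps k (Suc t))"
    by (simp add: sum.atLeast_Suc_atMost sum.shift_bounds_cl_Suc_ivl del: sum.cl_ivl_Suc)
  also have "(\<Sum>t = 1..B. rho_term n ps k (Suc t)) = rho_tail n (Tinf n ps) k"
    unfolding rho_tail_def rho_term_Suc[symmetric] using vanish
    by (intro sum_nonzero_eq_sum_upto[where g = "\<lambda>t. rho_term n ps k (Suc t)", symmetric]) auto
  finally show ?thesis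
    by (simp only: rho_term_1)
qed

lemma partial_mass_Suc_row:
  "partial_mass xs (Suc k) d = partial_mass xs k d + (\<Sum>i = 2..d. int (xs ! k ! (i - 1)))"
  by (simp add: partial_mass_def)

lemma partial_mass_Suc_column:
  assumes "1 \<le> d"
  shows "partial_mass xs k (Suc d) = partial_mass xs k d + (\<Sum>j < k. int (xs ! j ! d))"
proof -
  have "partial_mass xs k (Suc d)
      = partial_mass xs k d + (\<Sum>j = 1..k. int (xs ! (j - 1) ! d))"
    using assms by (simp add: partial_mass_def sum.distrib)
  then show ?thesis
    by (simp add: sum.atLeast1_atMost_eq)
qed

lemma max_diff_eq_diff_min:
  fixes x a b :: "'a::linordered_ab_group_add"
  shows "max (x - a) (x - b) = x - min a b"
  by (auto simp: max_def min_def)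

lemma partial_mass_identity:
  assumes wf: "wf_state n ps" and K: "K < length ps" and e: "1 \<le> e" "e \<le> n"
  defines "qs \<equiv> Tinf n ps"
  shows "partial_mass qs (Suc K) e + partial_mass ps K (Suc e)
       = max (partial_mass qs (Suc K) (Suc e) + partial_mass ps K e)
             (partial_mass qs K e + (partial_mass qs (Suc K) (n + 1) - partial_mass qs K (n + 1))
              + partial_mass ps (Suc K) (Suc e) - int (sum_list (ps ! K)))"
proof -
  let ?q = "\<lambda>i. int (qs ! K ! i)"
  let ?lhs = "partial_mass qs (Suc K) e + partial_mass ps K (Suc e)"
  have size: "int (sum_list (ps ! K)) = ?q 0 + (\<Sum>i = 2..n + 1. ?q (i - 1))"
    using sum_list_Tinf_nth[OF wf K] sum_list_eq_sum_nth[of "qs ! K" n]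
      wf_state_Tinf[OF wf] K length_Tinf[OF wf]
    by (simp add: qs_def wf_state_def sum.atLeast_Suc_atMost numeral_2_eq_2 del: sum.cl_ivl_Suc)
  have prefix: "(\<Sum>i = 1..e. ?q (i - 1)) = ?q 0 + (\<Sum>i = 2..e. ?q (i - 1))"
    using e by (simp add: sum.atLeast_Suc_atMost numeral_2_eq_2 del: sum.cl_ivl_Suc)
  have "partial_mass qs (Suc K) (Suc e) + partial_mass ps K e
      = ?lhs - ((\<Sum>j < K. int (ps ! j ! e)) - (\<Sum>j < Suc K. int (qs ! j ! e)))"
    using partial_mass_Suc_column[OF e(1), of qs "Suc K"] partial_mass_Suc_column[OF e(1), of ps K]
    by linarith
  moreover have "partial_mass qs K e + (partial_mass qs (Suc K) (n + 1) - partial_mass qs K (n + 1))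
      + partial_mass ps (Suc K) (Suc e) - int (sum_list (ps ! K))
      = ?lhs - ((\<Sum>i = 1..e. ?q (i - 1)) - (\<Sum>i = 2..Suc e. int (ps ! K ! (i - 1))))"
    using partial_mass_Suc_row[of qs K e] partial_mass_Suc_row[of qs K "n + 1"]
      partial_mass_Suc_row[of ps K "Suc e"] size prefix
    by linarith
  ultimately show ?thesis
    using Tinf_local_identity[OF wf K] e unfolding qs_def
    by (simp only: max_diff_eq_diff_min atLeastAtMost_iff simp_thms diff_zero)
qed

theorem proposition4p2:
  fixes n :: nat and ps :: "nat list list" and k d :: nat
  assumes "1 \<le> n"
    and "\<forall>p \<in> set ps. length p = n + 1 \<and> 1 \<le> sum_list p"
    and "1 \<le> k" and "k \<le> length ps"
    and "2 \<le> d" and "d \<le> n + 1"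
  shows "rho n (Tinf n ps) k (d - 1) + rho n ps (k - 1) d
         = max (rho n (Tinf n ps) k d + rho n ps (k - 1) (d - 1))
               (rho n (Tinf n ps) (k - 1) (d - 1) + rho n ps k d - int (sum_list (ps ! (k - 1))))"
proof -
  define K e where "K = k - 1" and "e = d - 1"
  have k: "k = Suc K" and d: "d = Suc e" and K: "K < length ps" and e: "1 \<le> e" "e \<le> n"
    using assms(3-6) by (auto simp: K_def e_def)
  have wf: "wf_state n ps"
    using assms(2) by (simp add: wf_state_def)
  show ?thesis
    using partial_mass_identity[OF wf K e] rho_tail_Tinf[OF wf, of K] rho_tail_Tinf[OF wf, of k]
      K e
    unfolding k d by (simp add: rho_eq_partial_mass_add_tail)
qed

end
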